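(* For every integer $n\ge 0$, \[ \sum_{j=0}^{n} \frac{q^{2j}(q;q)_{n+j}}{(q^2;q^2)_j}=(q;q^2)_{n+1}+q^{n+1}(q^2;q^2)_n . \]
   Context: $(a;q)_0:=1$ and $(a;q)_n:=(1-a)(1-aq)\cdots(1-aq^{n-1})$ for $n\ge1$. *)

theory Defs
  imports Main
begin

definition qpoch :: "'a::comm_ring_1 \<Rightarrow> 'a \<Rightarrow> nat \<Rightarrow> 'a" where
  "qpoch a q n = (\<Prod>k<n. (1 - a * q ^ k))"

end

theory Submission
  imports Defs
begin

text \<open>Write P(m) = (q;q)_m, D(j) = (q^2;q^2)_j and S_k(n) = \<Sum>_{j\<le>n} q^(kj) P(n+j)/D(j),
  so the left-hand side is S_2(n). The terms (q^(2j) - q^(n+1+j)) P(n+j)/D(j) telescope to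
  P(2n+1)/D(n), so S_2(n) = P(2n+1)/D(n) + q^(n+1) S_1(n); and P(2n+1)/D(n) = (q;q^2)_(n+1),
  the even factors of P(2n+1) forming D(n). Splitting P(n+1+j) = P(n+j)(1 - q^(n+1+j)) expresses
  S_1(n+1) through S_1(n) and S_2(n); with the previous identity this becomes
  S_1(n+1) = (1 - q^(2n+2)) S_1(n), hence S_1(n) = D(n).\<close>

lemma qpoch_0 [simp]: "qpoch a q 0 = 1"
  by (simp add: qpoch_def)

lemma qpoch_Suc: "qpoch a q (Suc n) = qpoch a q n * (1 - a * q ^ n)"
  by (simp add: qpoch_def)

lemma qpoch_base_Suc: "qpoch q q (Suc n) = qpoch q q n * (1 - q ^ Suc n)"
  by (simp add: qpoch_Suc)

lemma qpoch_square_Suc: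
  "qpoch (q\<^sup>2) (q\<^sup>2) (Suc n) = qpoch (q\<^sup>2) (q\<^sup>2) n * (1 - q ^ (2 * n + 2))"
  by (simp add: qpoch_Suc power_mult [symmetric] power_add [symmetric])

lemma qpoch_odd_mult_even:
  "qpoch q (q\<^sup>2) (n + 1) * qpoch (q\<^sup>2) (q\<^sup>2) n = qpoch q q (2 * n + 1)"
proof (induction n)
  case 0
  then show ?case by (simp add: qpoch_Suc)
next
  case (Suc n)
  have "q * (q\<^sup>2) ^ (n + 1) = q ^ (1 + 2 * (n + 1))"
    by (simp add: power_add power_mult power2_eq_square)
  then have odd_factor: "q * (q\<^sup>2) ^ (n + 1) = q ^ (2 * n + 3)"
    by (simp add: numeral_3_eq_3)
  have "qpoch q (q\<^sup>2) (Suc n + 1) * qpoch (q\<^sup>2) (q\<^sup>2) (Suc n)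
      = (qpoch q (q\<^sup>2) (n + 1) * qpoch (q\<^sup>2) (q\<^sup>2) n) * (1 - q ^ (2 * n + 2)) * (1 - q ^ (2 * n + 3))"
    using qpoch_Suc [of q "q\<^sup>2" "n + 1"] odd_factor by (simp add: qpoch_square_Suc mult_ac)
  also have "\<dots> = qpoch q q (2 * Suc n + 1)"
    using qpoch_base_Suc [of q "2 * n + 1"] qpoch_base_Suc [of q "2 * n + 2"]
    unfolding Suc.IH by (simp add: numeral_3_eq_3)
  finally show ?case .
qed

lemma qpoch_telescoping_sum:
  fixes q :: "'a::field"
  assumes "\<forall>j\<le>m. qpoch (q\<^sup>2) (q\<^sup>2) j \<noteq> 0"
  shows "(\<Sum>j=0..m. (q ^ (2 * j) - q ^ (n + 1 + j)) * qpoch q q (n + j) / qpoch (q\<^sup>2) (q\<^sup>2) j)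
         = qpoch q q (n + m + 1) / qpoch (q\<^sup>2) (q\<^sup>2) m"
  using assms
proof (induction m)
  case 0
  then show ?case using qpoch_base_Suc [of q n] by (simp add: algebra_simps)
next
  case (Suc m)
  let ?D = "qpoch (q\<^sup>2) (q\<^sup>2)" and ?P = "qpoch q q"
  have D_Suc: "?D (Suc m) = ?D m * (1 - q ^ (2 * m + 2))"
    by (rule qpoch_square_Suc)
  have "?D m \<noteq> 0" "1 - q ^ (2 * m + 2) \<noteq> 0"
    using Suc.prems D_Suc by auto
  have "(\<Sum>j=0..Suc m. (q ^ (2 * j) - q ^ (n + 1 + j)) * ?P (n + j) / ?D j)
      = ?P (n + m + 1) / ?D m
        + (q ^ (2 * m + 2) - q ^ (n + m + 2)) * ?P (n + m + 1) / (?D m * (1 - q ^ (2 * m + 2)))"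
    using Suc D_Suc by (simp add: algebra_simps)
  also have "\<dots> = ?P (n + m + 1) * (1 - q ^ (n + m + 2)) / (?D m * (1 - q ^ (2 * m + 2)))"
    using \<open>?D m \<noteq> 0\<close> \<open>1 - q ^ (2 * m + 2) \<noteq> 0\<close> by (simp add: field_simps)
  also have "\<dots> = ?P (n + Suc m + 1) / ?D (Suc m)"
    using qpoch_base_Suc [of q "n + m + 1"] D_Suc by simp
  finally show ?case .
qed

definition weighted_qsum :: "nat \<Rightarrow> 'a::field \<Rightarrow> nat \<Rightarrow> 'a" where
  "weighted_qsum k q n = (\<Sum>j=0..n. q ^ (k * j) * qpoch q q (n + j) / qpoch (q\<^sup>2) (q\<^sup>2) j)"

lemma weighted_qsum_2_eq:
  fixes q :: "'a::field"
  assumes "\<forall>j\<le>n. qpoch (q\<^sup>2) (q\<^sup>2) j \<noteq> 0"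
  shows "weighted_qsum 2 q n
         = qpoch q q (2 * n + 1) / qpoch (q\<^sup>2) (q\<^sup>2) n + q ^ (n + 1) * weighted_qsum 1 q n"
proof -
  have "weighted_qsum 2 q n
      = (\<Sum>j=0..n. (q ^ (2 * j) - q ^ (n + 1 + j)) * qpoch q q (n + j) / qpoch (q\<^sup>2) (q\<^sup>2) j)
        + q ^ (n + 1) * weighted_qsum 1 q n"
    unfolding weighted_qsum_def
    by (simp add: sum_distrib_left sum.distrib [symmetric] algebra_simps power_add diff_divide_distrib)
  then show ?thesis
    using qpoch_telescoping_sum [OF assms, of n] by (simp add: mult_2)
qed

lemma weighted_qsum_1_Suc_via_2:
  fixes q :: "'a::field"
  assumes nonzero: "qpoch (q\<^sup>2) (q\<^sup>2) (Suc n) \<noteq> 0"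
  shows "weighted_qsum 1 q (Suc n) = weighted_qsum 1 q n
           + q ^ (n + 1) * (qpoch q q (2 * n + 1) / qpoch (q\<^sup>2) (q\<^sup>2) n - weighted_qsum 2 q n)"
proof -
  let ?D = "qpoch (q\<^sup>2) (q\<^sup>2)" and ?P = "qpoch q q" and ?R = "qpoch q q (2 * n + 1)"
  let ?x = "q ^ (n + 1)"
  have D_Suc: "?D (Suc n) = ?D n * (1 - ?x * ?x)"
    using qpoch_square_Suc [of q n] by (simp add: power_add [symmetric] mult_2)
  have split_term: "q ^ j * ?P (Suc n + j) / ?D j
      = q ^ j * ?P (n + j) / ?D j - ?x * (q ^ (2 * j) * ?P (n + j) / ?D j)" for j
  proof -
    have powers: "q ^ j * q ^ (n + 1 + j) = ?x * q ^ (2 * j)"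
      by (simp add: power_add [symmetric] mult_2 add_ac)
    have "?P (Suc n + j) = ?P (n + j) * (1 - q ^ (n + 1 + j))"
      using qpoch_base_Suc [of q "n + j"] by simp
    then have "q ^ j * ?P (Suc n + j) = q ^ j * ?P (n + j) - (q ^ j * q ^ (n + 1 + j)) * ?P (n + j)"
      by (simp only: right_diff_distrib mult_1_right mult_1_left mult_ac)
    then show ?thesis
      unfolding powers by (simp only: diff_divide_distrib mult.assoc times_divide_eq_right)
  qed
  have top_terms: "?x * ?R / ?D (Suc n) - ?x * (?x * ?x * ?R / ?D (Suc n)) = ?x * (?R / ?D n)"
    using nonzero unfolding D_Suc by (simp add: divide_simps) (simp add: algebra_simps)
  have "weighted_qsum 1 q (Suc n)
      = (\<Sum>j=0..Suc n. q ^ j * ?P (n + j) / ?D j)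
        - ?x * (\<Sum>j=0..Suc n. q ^ (2 * j) * ?P (n + j) / ?D j)"
    unfolding weighted_qsum_def mult_1 split_term sum_subtractf sum_distrib_left ..
  also have "\<dots> = weighted_qsum 1 q n + ?x * ?R / ?D (Suc n)
        - ?x * (weighted_qsum 2 q n + ?x * ?x * ?R / ?D (Suc n))"
    by (simp add: weighted_qsum_def mult_2 power_add)
  also have "\<dots> = weighted_qsum 1 q n + ?x * (?R / ?D n - weighted_qsum 2 q n)"
    using top_terms by (simp add: algebra_simps)
  finally show ?thesis .
qed

lemma weighted_qsum_1_Suc:
  fixes q :: "'a::field"
  assumes nonzero: "\<forall>j\<le>Suc n. qpoch (q\<^sup>2) (q\<^sup>2) j \<noteq> 0"
  shows "weighted_qsum 1 q (Suc n) = weighted_qsum 1 q n * (1 - q ^ (2 * n + 2))"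
proof -
  have "weighted_qsum 1 q (Suc n) = weighted_qsum 1 q n - q ^ (n + 1) * (q ^ (n + 1) * weighted_qsum 1 q n)"
    using weighted_qsum_1_Suc_via_2 [of q n] weighted_qsum_2_eq [of n q] nonzero by simp
  also have "\<dots> = weighted_qsum 1 q n * (1 - q ^ (n + 1) * q ^ (n + 1))"
    by (simp add: algebra_simps)
  also have "q ^ (n + 1) * q ^ (n + 1) = q ^ (2 * n + 2)"
    by (simp add: power_add [symmetric] mult_2)
  finally show ?thesis .
qed

lemma weighted_qsum_1_eq:
  fixes q :: "'a::field"
  assumes "\<forall>j\<le>n. qpoch (q\<^sup>2) (q\<^sup>2) j \<noteq> 0"
  shows "weighted_qsum 1 q n = qpoch (q\<^sup>2) (q\<^sup>2) n"
  using assms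
proof (induction n)
  case 0
  then show ?case by (simp add: weighted_qsum_def)
next
  case (Suc n)
  then show ?case
    using weighted_qsum_1_Suc [OF Suc.prems] qpoch_square_Suc [of q n] by simp
qed

theorem lemma3p4:
  fixes q :: "'a::field" and n :: nat
  assumes "\<forall>j\<le>n. qpoch (q^2) (q^2) j \<noteq> 0"
  shows "(\<Sum>j=0..n. q^(2*j) * qpoch q q (n+j) / qpoch (q^2) (q^2) j)
         = qpoch q (q^2) (n+1) + q^(n+1) * qpoch (q^2) (q^2) n"
proof -
  have "qpoch q q (2 * n + 1) / qpoch (q\<^sup>2) (q\<^sup>2) n = qpoch q (q\<^sup>2) (n + 1)"
    using qpoch_odd_mult_even [of q n] assms by (simp add: field_simps)
  then show ?thesis
    using weighted_qsum_2_eq [OF assms] weighted_qsum_1_eq [OF assms]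
    unfolding weighted_qsum_def by simp
qed

end
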